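(* Fix one of the types I–V with data $J$, $(\phi_j)$, $(n_j)$ as in the context, let $H$ be continuous on $\mathbb{R}$, and fix an admissible index $i$ ($i=0$ for Type I; $i\in J\setminus\{\max J\}$ for Types II–V). Let $\mathbf{x}(s)$ be a solution of $$\mathbf{x}''(s)^\perp\cdot\mathbf{x}'(s)+\sum_{j\in J}\frac{n_j\,\mathbf{e}(\phi_j)\cdot\mathbf{x}'(s)}{\mathbf{e}(\phi_j)^\perp\cdot\mathbf{x}(s)}=(n-1)H(s),\qquad \|\mathbf{x}'(s)\|^2=1,$$ for $s$ near $0$, $s\neq0$ on one side of $0$, taking values in the sector $S_i$, and assume $$\lim_{s\to0}\mathbf{e}(\phi_i)^\perp\cdot\mathbf{x}(s)=0,\qquad \lim_{s\to0}\mathbf{x}(s)=\mathbf{x}_0\neq\mathbf{0}.$$ Then the limit of $\mathbf{x}'(s)$ as $s\to0$ exists and $\lim_{s\to0}\mathbf{e}(\phi_i)\cdot\mathbf{x}'(s)=0$.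
   Context: For $\mathbf{a}=(a,b)\in\mathbb{R}^2$ write $\mathbf{a}^\perp=(-b,a)$; $\mathbf{e}(\phi)=(\cos\phi,\sin\phi)$, $\mathbf{e}(\phi)^\perp=(-\sin\phi,\cos\phi)$. Type data ($J$ a finite set of consecutive integers, $\sum_{j}n_j=n-2$): Type I: $J=\{0\}$, $\phi_0=0$, $n_0=n-2$, $n\ge3$. Type II: $J=\{0,1\}$, $\phi_0=0$, $\phi_1=\pi/2$, $n_0=m$, $n_1=\ell$ ($n=\ell+m+2$, $\ell,m\in\mathbb{N}$). Type III: $J=\{-1,0,1\}$, $\phi_j=j\pi/3$, $n_j\equiv c$ with $c\in\{1,2,4,8\}$ ($n=5,8,14,26$). Type IV: $J=\{-1,0,1,2\}$, $\phi_j=j\pi/4$, $n_{\pm1}=\ell$, $n_0=n_2=k$, $(k,\ell)\in\{(2,2),(5,4),(9,6),(m-2,1),(2m-3,2),(4m-5,4)\}$. Type V: $J=\{-2,\dots,3\}$, $\phi_j=j\pi/6$, $n_j\equiv c$ with $c\in\{1,2\}$. Sector: for Type I, $S_0=\{(x,y):y>0\}$; for Types II–V, $S_i=\{\mathbf{x}\in\mathbb{R}^2:\mathbf{e}(\phi_{i+1})^\perp\cdot\mathbf{x}<0<\mathbf{e}(\phi_i)^\perp\cdot\mathbf{x}\}$. *)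

theory Defs
  imports "HOL-Analysis.Analysis"
begin

definition perp :: "real \<times> real \<Rightarrow> real \<times> real" where
  "perp v = (- snd v, fst v)"

definition evec :: "real \<Rightarrow> real \<times> real" where
  "evec \<phi> = (cos \<phi>, sin \<phi>)"

text \<open>Type data: t \<in> {1..5} is the type (I..V), J the index set, phi the angles,
  nn the multiplicities n_j, n the dimension parameter.\<close>

definition type_data :: "nat \<Rightarrow> int set \<Rightarrow> (int \<Rightarrow> real) \<Rightarrow> (int \<Rightarrow> nat) \<Rightarrow> nat \<Rightarrow> bool" where
  "type_data t J phi nn n \<longleftrightarrow>
     (t = 1 \<and> J = {0} \<and> phi 0 = 0 \<and> n \<ge> 3 \<and> nn 0 = n - 2)
   \<or> (t = 2 \<and> J = {0, 1} \<and> phi 0 = 0 \<and> phi 1 = pi / 2 \<and>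
        (\<exists>m l. m \<ge> 1 \<and> l \<ge> 1 \<and> nn 0 = m \<and> nn 1 = l \<and> n = l + m + 2))
   \<or> (t = 3 \<and> J = {-1, 0, 1} \<and> (\<forall>j\<in>J. phi j = real_of_int j * pi / 3) \<and>
        (\<exists>c\<in>{1, 2, 4, 8}. (\<forall>j\<in>J. nn j = c) \<and> n = 3 * c + 2))
   \<or> (t = 4 \<and> J = {-1, 0, 1, 2} \<and> (\<forall>j\<in>J. phi j = real_of_int j * pi / 4) \<and>
        (\<exists>k l. nn (-1) = l \<and> nn 1 = l \<and> nn 0 = k \<and> nn 2 = k \<and> k \<ge> 1 \<and>
           ((k, l) \<in> {(2, 2), (5, 4), (9, 6)} \<or>
            (\<exists>m::int. (int k = m - 2 \<and> l = 1) \<or> (int k = 2 * m - 3 \<and> l = 2)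
                      \<or> (int k = 4 * m - 5 \<and> l = 4))) \<and>
           n = 2 * k + 2 * l + 2))
   \<or> (t = 5 \<and> J = {-2..3} \<and> (\<forall>j\<in>J. phi j = real_of_int j * pi / 6) \<and>
        (\<exists>c\<in>{1, 2}. (\<forall>j\<in>J. nn j = c) \<and> n = 6 * c + 2))"

definition admissible :: "nat \<Rightarrow> int set \<Rightarrow> int \<Rightarrow> bool" where
  "admissible t J i \<longleftrightarrow> (if t = 1 then i = 0 else i \<in> J - {Max J})"

definition sector :: "nat \<Rightarrow> (int \<Rightarrow> real) \<Rightarrow> int \<Rightarrow> (real \<times> real) set" where
  "sector t phi i =
     (if t = 1 then {p. snd p > 0}
      else {p. perp (evec (phi (i + 1))) \<bullet> p < 0 \<and> 0 < perp (evec (phi i)) \<bullet> p})"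

end

theory Submission
  imports Defs
begin

text \<open>Let \<open>u = e(\<phi>\<^sub>i)\<^sup>\<bottom> \<cdot> x\<close> be the distance to the wall \<open>i\<close>, \<open>w = u'\<close> and \<open>c = e(\<phi>\<^sub>i) \<cdot> x'\<close>,
  so \<open>c\<^sup>2 + w\<^sup>2 = 1\<close>. Since \<open>x''\<close> is orthogonal to the unit vector \<open>x'\<close>, the curve equation gives
  \<open>w' = c (n\<^sub>i c / u + r)\<close>, where the remaining terms \<open>r\<close> stay bounded because \<open>x\<^sub>0 \<noteq> 0\<close> lies on
  no other wall; hence \<open>w' \<ge> n\<^sub>i (1 - w\<^sup>2) / u - M\<close>. On the side \<open>s > 0\<close> this makes \<open>w + M s\<close>
  nondecreasing, and it is positive because \<open>u > 0\<close> and \<open>u \<rightarrow> 0\<close>. If it were below 1 somewhere,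
  \<open>|w|\<close> would stay below some \<open>\<beta> < 1\<close> near 0 and, since \<open>u(s) \<le> s\<close>, its derivative would be at
  least \<open>n\<^sub>i (1 - \<beta>\<^sup>2) / s\<close>, which is not integrable at 0. So \<open>w \<rightarrow> 1\<close> (and \<open>w \<rightarrow> -1\<close> for
  \<open>s < 0\<close>, by reflection), whence \<open>c \<rightarrow> 0\<close> and \<open>x' = c e(\<phi>\<^sub>i) + w e(\<phi>\<^sub>i)\<^sup>\<bottom>\<close> converges.\<close>

section \<open>Planar geometry and unit-speed curves\<close>

lemma inner_perp_evec_evec: "perp (evec \<psi>) \<bullet> evec \<phi> = sin (\<phi> - \<psi>)"
  by (simp add: perp_def evec_def inner_Pair sin_diff algebra_simps)

lemma evec_perp_decomp: "v = (evec \<phi> \<bullet> v) *\<^sub>R evec \<phi> + (perp (evec \<phi>) \<bullet> v) *\<^sub>R perp (evec \<phi>)"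
proof (cases v)
  case (Pair a b)
  have "(cos \<phi>)\<^sup>2 + (sin \<phi>)\<^sup>2 = 1" by simp
  then have "a = (cos \<phi> * a + sin \<phi> * b) * cos \<phi> - (cos \<phi> * b - sin \<phi> * a) * sin \<phi>"
    and "b = (cos \<phi> * a + sin \<phi> * b) * sin \<phi> + (cos \<phi> * b - sin \<phi> * a) * cos \<phi>"
    by algebra+
  then show ?thesis using Pair by (simp add: perp_def evec_def inner_Pair algebra_simps)
qed

lemma inner_evec_sq_add_inner_perp_sq: "(evec \<phi> \<bullet> v)\<^sup>2 + (perp (evec \<phi>) \<bullet> v)\<^sup>2 = (norm v)\<^sup>2"
proof (cases v)
  case (Pair a b)
  have "(cos \<phi>)\<^sup>2 + (sin \<phi>)\<^sup>2 = 1" by simp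
  then have "(cos \<phi> * a + sin \<phi> * b)\<^sup>2 + (cos \<phi> * b - sin \<phi> * a)\<^sup>2 = a\<^sup>2 + b\<^sup>2"
    by algebra
  then show ?thesis using Pair by (simp add: perp_def evec_def inner_Pair norm_Pair algebra_simps)
qed

lemma inner_perp_evec_eq_if_orthogonal_unit:
  assumes "norm v = 1" "v \<bullet> a = 0"
  shows "perp (evec \<phi>) \<bullet> a = - (evec \<phi> \<bullet> v) * (perp a \<bullet> v)"
proof (cases v; cases a)
  fix v1 v2 a1 a2 assume v: "v = (v1, v2)" and a: "a = (a1, a2)"
  have "v1\<^sup>2 + v2\<^sup>2 = 1" "v1 * a1 + v2 * a2 = 0"
    using assms v a by (simp_all add: norm_Pair inner_Pair)
  then have "- sin \<phi> * a1 + cos \<phi> * a2 = - (cos \<phi> * v1 + sin \<phi> * v2) * (- a2 * v1 + a1 * v2)"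
    by algebra
  then show ?thesis using v a by (simp add: perp_def evec_def inner_Pair)
qed

text \<open>Applied with \<open>v = x'\<close>, \<open>a = x''\<close>, \<open>d\<close> the distance to the wall and \<open>r\<close> the regular
  terms of the curve equation.\<close>

lemma inner_perp_evec_accel_ge:
  assumes "norm v = 1" "v \<bullet> a = 0"
    and "perp a \<bullet> v + k * (evec \<phi> \<bullet> v) / d + r = 0"
  shows "k * (1 - (perp (evec \<phi>) \<bullet> v)\<^sup>2) / d - \<bar>r\<bar> \<le> perp (evec \<phi>) \<bullet> a"
proof -
  define c where "c = evec \<phi> \<bullet> v"
  have c_sq: "c\<^sup>2 = 1 - (perp (evec \<phi>) \<bullet> v)\<^sup>2"
    using inner_evec_sq_add_inner_perp_sq[of \<phi> v] assms(1) unfolding c_def by simp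
  then have "c\<^sup>2 \<le> 1"
    by (smt (verit) zero_le_power2)
  then have "\<bar>c\<bar> \<le> 1"
    by (simp add: abs_square_le_1)
  then have cr: "- \<bar>r\<bar> \<le> c * r"
    by (metis abs_ge_minus_self abs_mult minus_le_iff mult_left_le_one_le abs_ge_zero order_trans)
  have pa: "perp a \<bullet> v = - (k * c / d + r)"
    using assms(3) unfolding c_def by linarith
  have pe: "perp (evec \<phi>) \<bullet> a = - c * (perp a \<bullet> v)"
    using inner_perp_evec_eq_if_orthogonal_unit[OF assms(1,2)] unfolding c_def .
  have "perp (evec \<phi>) \<bullet> a = k * c\<^sup>2 / d + c * r"
    unfolding pe pa by (simp add: power2_eq_square algebra_simps)
  then show ?thesis
    using c_sq cr by simp
qed

lemma has_real_derivative_inner_right: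
  "(x has_vector_derivative v) F \<Longrightarrow> ((\<lambda>s. a \<bullet> x s) has_real_derivative a \<bullet> v) F"
  unfolding has_real_derivative_iff_has_vector_derivative
  by (rule bounded_linear.has_vector_derivative[OF bounded_linear_inner_right])

lemma unit_speed_imp_orthogonal_derivative:
  fixes x' x'' :: "real \<Rightarrow> 'a::real_inner"
  assumes "open I" "s \<in> I"
    and "\<And>s. s \<in> I \<Longrightarrow> (x' has_vector_derivative x'' s) (at s)"
    and "\<And>s. s \<in> I \<Longrightarrow> norm (x' s) = 1"
  shows "x' s \<bullet> x'' s = 0"
proof -
  have "((\<lambda>t. x' t \<bullet> x' t) has_real_derivative 2 * (x' s \<bullet> x'' s)) (at s)"
    using bounded_bilinear.has_vector_derivative[OF bounded_bilinear_inner
        assms(3)[OF assms(2)] assms(3)[OF assms(2)]]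
    by (simp add: has_real_derivative_iff_has_vector_derivative inner_commute)
  moreover have "((\<lambda>t. x' t \<bullet> x' t) has_real_derivative 0) (at s)"
  proof (rule has_field_derivative_transform_within_open[OF _ assms(1,2)])
    show "((\<lambda>_. 1) has_real_derivative 0) (at s)"
      by simp
    show "\<And>t. t \<in> I \<Longrightarrow> 1 = x' t \<bullet> x' t"
      using assms(4) by (simp add: power2_norm_eq_inner[symmetric])
  qed
  ultimately show ?thesis
    using DERIV_unique by fastforce
qed

lemma norm_perp_evec: "norm (perp (evec \<phi>)) = 1"
  by (simp add: perp_def evec_def norm_Pair)

lemma inner_perp_evec_neq_0_off_wall:
  assumes "perp (evec \<alpha>) \<bullet> p = 0" "p \<noteq> 0" "sin (\<alpha> - \<beta>) \<noteq> 0"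
  shows "perp (evec \<beta>) \<bullet> p \<noteq> 0"
proof -
  have p: "p = (evec \<alpha> \<bullet> p) *\<^sub>R evec \<alpha>"
    using evec_perp_decomp[of p \<alpha>] assms(1) by simp
  then have "evec \<alpha> \<bullet> p \<noteq> 0"
    using assms(2) by auto
  moreover have "perp (evec \<beta>) \<bullet> p = (evec \<alpha> \<bullet> p) * sin (\<alpha> - \<beta>)"
    by (subst p) (simp add: inner_perp_evec_evec)
  ultimately show ?thesis
    using assms(3) by simp
qed

lemma tendsto_velocity_if_tendsto_normal_component:
  fixes v :: "'a \<Rightarrow> real \<times> real"
  assumes "((\<lambda>s. perp (evec \<phi>) \<bullet> v s) \<longlongrightarrow> \<sigma>) F" "\<bar>\<sigma>\<bar> = 1"
    and "eventually (\<lambda>s. norm (v s) = 1) F"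
  shows "((\<lambda>s. evec \<phi> \<bullet> v s) \<longlongrightarrow> 0) F" "(v \<longlongrightarrow> \<sigma> *\<^sub>R perp (evec \<phi>)) F"
proof -
  have "\<sigma>\<^sup>2 = 1"
    using assms(2) by (metis power2_abs one_power2)
  then have "((\<lambda>s. 1 - (perp (evec \<phi>) \<bullet> v s)\<^sup>2) \<longlongrightarrow> 0) F"
    using tendsto_diff[OF tendsto_const tendsto_power[OF assms(1)], of 1 2] by simp
  moreover have "eventually (\<lambda>s. 1 - (perp (evec \<phi>) \<bullet> v s)\<^sup>2 = (evec \<phi> \<bullet> v s)\<^sup>2) F"
    using assms(3)
  proof eventually_elim
    case (elim s)
    then show ?case
      using inner_evec_sq_add_inner_perp_sq[of \<phi> "v s"] by simp
  qed
  ultimately have "((\<lambda>s. (evec \<phi> \<bullet> v s)\<^sup>2) \<longlongrightarrow> 0) F"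
    using tendsto_cong by fastforce
  then show c: "((\<lambda>s. evec \<phi> \<bullet> v s) \<longlongrightarrow> 0) F"
    by simp
  have "((\<lambda>s. (evec \<phi> \<bullet> v s) *\<^sub>R evec \<phi> + (perp (evec \<phi>) \<bullet> v s) *\<^sub>R perp (evec \<phi>))
      \<longlongrightarrow> 0 *\<^sub>R evec \<phi> + \<sigma> *\<^sub>R perp (evec \<phi>)) F"
    by (intro tendsto_intros c assms(1))
  then show "(v \<longlongrightarrow> \<sigma> *\<^sub>R perp (evec \<phi>)) F"
    by (simp flip: evec_perp_decomp)
qed

section \<open>The type data\<close>

lemma sin_of_int_mult_pi_div_neq_0:
  fixes m d :: int
  assumes "0 < \<bar>m\<bar>" "\<bar>m\<bar> < d"
  shows "sin (of_int m * pi / of_int d) \<noteq> 0"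
proof
  assume "sin (of_int m * pi / of_int d) = 0"
  then obtain j :: int where "of_int m * pi / of_int d = of_int j * pi"
    by (auto simp: sin_zero_iff_int2)
  then have "real_of_int m = of_int (j * d)"
    using assms by (simp add: field_simps)
  then have "m = j * d"
    by linarith
  moreover have "1 \<le> \<bar>j\<bar>"
    using assms calculation by auto
  moreover have "0 < d"
    using assms by linarith
  ultimately have "d \<le> \<bar>m\<bar>"
    using mult_right_mono[of 1 "\<bar>j\<bar>" d] by (simp add: abs_mult)
  then show False
    using assms by simp
qed

lemma type_data_finite: "type_data t J phi nn n \<Longrightarrow> finite J"
  unfolding type_data_def by auto

lemma type_data_multiplicity_pos: "type_data t J phi nn n \<Longrightarrow> j \<in> J \<Longrightarrow> 0 < nn j"
  unfolding type_data_def by auto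

lemma admissible_mem: "type_data t J phi nn n \<Longrightarrow> admissible t J i \<Longrightarrow> i \<in> J"
  unfolding type_data_def admissible_def by auto

lemma type_data_angles:
  assumes "type_data t J phi nn n"
  obtains d :: int where "\<And>j. j \<in> J \<Longrightarrow> phi j = of_int j * pi / of_int d"
    and "\<And>a b. a \<in> J \<Longrightarrow> b \<in> J \<Longrightarrow> \<bar>a - b\<bar> < d"
  using assms unfolding type_data_def
proof (elim disjE conjE)
  assume "J = {0}" "phi 0 = 0"
  then show thesis
    by (intro that[of 1]) auto
next
  assume "J = {0, 1}" "phi 0 = 0" "phi 1 = pi / 2"
  then show thesis
    by (intro that[of 2]) auto
next
  assume "J = {-1, 0, 1}" "\<forall>j\<in>J. phi j = real_of_int j * pi / 3"
  then show thesis
    by (intro that[of 3]) auto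
next
  assume "J = {-1, 0, 1, 2}" "\<forall>j\<in>J. phi j = real_of_int j * pi / 4"
  then show thesis
    by (intro that[of 4]) auto
next
  assume "J = {-2..3}" "\<forall>j\<in>J. phi j = real_of_int j * pi / 6"
  then show thesis
    by (intro that[of 6]) auto
qed

lemma type_data_sin_diff_neq_0:
  assumes "type_data t J phi nn n" "a \<in> J" "b \<in> J" "a \<noteq> b"
  shows "sin (phi a - phi b) \<noteq> 0"
proof -
  obtain d :: int where phi: "\<And>j. j \<in> J \<Longrightarrow> phi j = of_int j * pi / of_int d"
    and span: "\<And>a b. a \<in> J \<Longrightarrow> b \<in> J \<Longrightarrow> \<bar>a - b\<bar> < d"
    using type_data_angles[OF assms(1)] by blast
  have "phi a - phi b = of_int (a - b) * pi / of_int d"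
    using phi assms(2,3) by (simp add: diff_divide_distrib left_diff_distrib)
  then show ?thesis
    using sin_of_int_mult_pi_div_neq_0[of "a - b" d] span[OF assms(2,3)] assms(4) by simp
qed

lemma sector_inner_perp_pos:
  assumes "type_data t J phi nn n" "admissible t J i" "p \<in> sector t phi i"
  shows "0 < perp (evec (phi i)) \<bullet> p"
proof (cases "t = 1")
  case True
  then have "i = 0" "phi 0 = 0"
    using assms(1,2) unfolding type_data_def admissible_def by auto
  then show ?thesis
    using assms(3) True by (cases p) (simp add: sector_def perp_def evec_def inner_Pair)
next
  case False
  then show ?thesis
    using assms(3) by (simp add: sector_def)
qed

section \<open>Bounded terms and a one-dimensional comparison argument\<close>

lemma eventually_abs_le_limit_plus_1:
  fixes f :: "'a \<Rightarrow> real"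
  shows "(f \<longlongrightarrow> l) F \<Longrightarrow> eventually (\<lambda>s. \<bar>f s\<bar> \<le> \<bar>l\<bar> + 1) F"
  by (drule tendsto_rabs, drule order_tendstoD(2)[of _ _ _ "\<bar>l\<bar> + 1"]) (auto elim: eventually_mono)

lemma eventually_bounded_quotient_sum_diff:
  fixes x y :: "'b \<Rightarrow> 'a::real_inner" and a b :: "'j \<Rightarrow> 'a" and c :: "'j \<Rightarrow> real"
    and h :: "'b \<Rightarrow> real"
  assumes "finite K" "(x \<longlongrightarrow> x0) F" "\<And>j. j \<in> K \<Longrightarrow> b j \<bullet> x0 \<noteq> 0"
    and "eventually (\<lambda>s. norm (y s) \<le> 1) F" "(h \<longlongrightarrow> h0) F"
  obtains M where "0 \<le> M"
    and "eventually (\<lambda>s. \<bar>(\<Sum>j\<in>K. c j * (a j \<bullet> y s) / (b j \<bullet> x s)) - h s\<bar> \<le> M) F"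
proof -
  define B where "B j = norm (a j) * (\<bar>c j / (b j \<bullet> x0)\<bar> + 1)" for j
  have term_bound: "eventually (\<lambda>s. \<bar>c j * (a j \<bullet> y s) / (b j \<bullet> x s)\<bar> \<le> B j) F"
    if "j \<in> K" for j
  proof -
    have "((\<lambda>s. c j / (b j \<bullet> x s)) \<longlongrightarrow> c j / (b j \<bullet> x0)) F"
      using assms(3)[OF that] by (intro tendsto_intros assms(2))
    then have "eventually (\<lambda>s. \<bar>c j / (b j \<bullet> x s)\<bar> \<le> \<bar>c j / (b j \<bullet> x0)\<bar> + 1) F"
      by (rule eventually_abs_le_limit_plus_1)
    with assms(4) show ?thesis
    proof eventually_elim
      case (elim s)
      have "\<bar>a j \<bullet> y s\<bar> \<le> norm (a j)"
        using Cauchy_Schwarz_ineq2[of "a j" "y s"] elim(1)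
        by (metis mult_left_le norm_ge_zero order_trans)
      then have "\<bar>a j \<bullet> y s\<bar> * \<bar>c j / (b j \<bullet> x s)\<bar> \<le> B j"
        unfolding B_def using elim(2) by (intro mult_mono) auto
      then show ?case
        by (simp add: abs_mult mult.commute)
    qed
  qed
  have "eventually (\<lambda>s. \<forall>j\<in>K. \<bar>c j * (a j \<bullet> y s) / (b j \<bullet> x s)\<bar> \<le> B j) F"
    using assms(1) term_bound by (simp add: eventually_ball_finite)
  moreover have "eventually (\<lambda>s. \<bar>h s\<bar> \<le> \<bar>h0\<bar> + 1) F"
    using assms(5) by (rule eventually_abs_le_limit_plus_1)
  ultimately have "eventually (\<lambda>s. \<bar>(\<Sum>j\<in>K. c j * (a j \<bullet> y s) / (b j \<bullet> x s)) - h s\<bar>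
      \<le> (\<Sum>j\<in>K. B j) + (\<bar>h0\<bar> + 1)) F"
  proof eventually_elim
    case (elim s)
    have "\<bar>\<Sum>j\<in>K. c j * (a j \<bullet> y s) / (b j \<bullet> x s)\<bar> \<le> (\<Sum>j\<in>K. B j)"
      using elim(1) by (intro order_trans[OF sum_abs sum_mono]) auto
    then show ?case
      using elim(2) by linarith
  qed
  moreover have "0 \<le> (\<Sum>j\<in>K. B j) + (\<bar>h0\<bar> + 1)"
    unfolding B_def by (intro add_nonneg_nonneg sum_nonneg) auto
  ultimately show thesis
    using that by blast
qed

lemma DERIV_le_imp_le_mult_at_right_0:
  fixes u w :: "real \<Rightarrow> real"
  assumes "(u \<longlongrightarrow> 0) (at_right 0)" "0 < s"
    and "\<And>t. 0 < t \<Longrightarrow> t \<le> s \<Longrightarrow> (u has_real_derivative w t) (at t)"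
    and "\<And>t. 0 < t \<Longrightarrow> t < s \<Longrightarrow> w t \<le> b"
  shows "u s \<le> b * s"
proof (rule tendsto_le[OF _ _ tendsto_const])
  have "((\<lambda>e. u e + b * (s - e)) \<longlongrightarrow> 0 + b * (s - 0)) (at_right 0)"
    by (intro tendsto_intros assms(1))
  then show "((\<lambda>e. u e + b * (s - e)) \<longlongrightarrow> b * s) (at_right 0)"
    by simp
  have "u s \<le> u e + b * (s - e)" if "0 < e" "e < s" for e
  proof -
    have "\<forall>t. e \<le> t \<and> t \<le> s \<longrightarrow> (u has_real_derivative w t) (at t)"
      using assms(3) \<open>0 < e\<close> by simp
    then obtain z where "e < z" "z < s" "u s - u e = (s - e) * w z"
      using MVT2[OF \<open>e < s\<close>] by blast
    moreover have "(s - e) * w z \<le> b * (s - e)"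
      using assms(4) calculation that by (simp add: mult.commute mult_right_mono)
    ultimately show ?thesis
      by linarith
  qed
  then show "eventually (\<lambda>e. u s \<le> u e + b * (s - e)) (at_right 0)"
    unfolding eventually_at_right_field using assms(2) by blast
qed simp

text \<open>Here \<open>u\<close> stands for the distance of the curve to the wall and \<open>w = u'\<close>.\<close>

locale slope_comparison =
  fixes u w w' :: "real \<Rightarrow> real" and k M \<delta> :: real
  assumes delta_pos: "0 < \<delta>" and k_pos: "0 < k" and M_nonneg: "0 \<le> M"
    and u_deriv: "\<And>s. 0 < s \<Longrightarrow> s < \<delta> \<Longrightarrow> (u has_real_derivative w s) (at s)"
    and w_deriv: "\<And>s. 0 < s \<Longrightarrow> s < \<delta> \<Longrightarrow> (w has_real_derivative w' s) (at s)"
    and u_pos: "\<And>s. 0 < s \<Longrightarrow> s < \<delta> \<Longrightarrow> 0 < u s"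
    and w_bound: "\<And>s. 0 < s \<Longrightarrow> s < \<delta> \<Longrightarrow> \<bar>w s\<bar> \<le> 1"
    and w'_lower: "\<And>s. 0 < s \<Longrightarrow> s < \<delta> \<Longrightarrow> k * (1 - (w s)\<^sup>2) / u s - M \<le> w' s"
    and u_tendsto_0: "(u \<longlongrightarrow> 0) (at_right 0)"
begin

lemma w_plus_M_mono:
  assumes "0 < a" "a \<le> b" "b < \<delta>"
  shows "w a + M * a \<le> w b + M * b"
proof (rule DERIV_nonneg_imp_nondecreasing[OF assms(2)])
  fix t assume t: "a \<le> t" "t \<le> b"
  then have "0 < t" "t < \<delta>"
    using assms by auto
  have "0 \<le> k * (1 - (w t)\<^sup>2) / u t"
    using k_pos u_pos[OF \<open>0 < t\<close> \<open>t < \<delta>\<close>] w_bound[OF \<open>0 < t\<close> \<open>t < \<delta>\<close>]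
    by (simp add: abs_square_le_1)
  then have "0 \<le> w' t + M"
    using w'_lower[OF \<open>0 < t\<close> \<open>t < \<delta>\<close>] by linarith
  moreover have "((\<lambda>s. w s + M * s) has_real_derivative w' t + M) (at t)"
    using w_deriv[OF \<open>0 < t\<close> \<open>t < \<delta>\<close>] by (auto intro!: derivative_eq_intros)
  ultimately show "\<exists>y. ((\<lambda>s. w s + M * s) has_real_derivative y) (at t) \<and> 0 \<le> y"
    by blast
qed

lemma u_le:
  assumes "0 < s" "s < \<delta>"
  shows "u s \<le> s"
proof -
  have "u s \<le> 1 * s"
  proof (rule DERIV_le_imp_le_mult_at_right_0[OF u_tendsto_0 assms(1)])
    show "(u has_real_derivative w t) (at t)" if "0 < t" "t \<le> s" for t
      using u_deriv that assms by simp
    show "w t \<le> 1" if "0 < t" "t < s" for t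
      using w_bound[of t] that assms by simp
  qed
  then show ?thesis
    by simp
qed

lemma w_plus_M_pos:
  assumes "0 < s" "s < \<delta>"
  shows "0 < w s + M * s"
proof (rule ccontr)
  assume "\<not> 0 < w s + M * s"
  have "w t \<le> 0" if "0 < t" "t < s" for t
  proof -
    have "w t + M * t \<le> w s + M * s"
      using w_plus_M_mono[of t s] that assms by simp
    moreover have "0 \<le> M * t"
      using M_nonneg that by simp
    ultimately show ?thesis
      using \<open>\<not> 0 < w s + M * s\<close> by linarith
  qed
  then have "u s \<le> 0 * s"
    using u_deriv assms by (intro DERIV_le_imp_le_mult_at_right_0[OF u_tendsto_0 assms(1), of w]) auto
  then show False
    using u_pos[OF assms] by simp
qed

text \<open>Where \<open>1 - w\<^sup>2\<close> stays above \<open>\<gamma>\<close>, the lower bound for \<open>w'\<close> dominates \<open>k \<gamma> / s\<close>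
  because \<open>u s \<le> s\<close>; integrating gives logarithmic growth.\<close>

lemma w_plus_M_log_growth:
  assumes "0 < \<gamma>" "0 < e" "e \<le> s" "s < \<delta>"
    and gap: "\<And>t. 0 < t \<Longrightarrow> t \<le> s \<Longrightarrow> \<gamma> \<le> 1 - (w t)\<^sup>2"
  shows "k * \<gamma> * (ln s - ln e) \<le> (w s + M * s) - (w e + M * e)"
proof -
  define q where "q t = w t + M * t - k * \<gamma> * ln t" for t
  have "q e \<le> q s"
  proof (rule DERIV_nonneg_imp_nondecreasing[OF \<open>e \<le> s\<close>])
    fix t assume t: "e \<le> t" "t \<le> s"
    then have "0 < t" "t < \<delta>"
      using assms by auto
    have "k * \<gamma> / t \<le> k * \<gamma> / u t"
      using u_pos[OF \<open>0 < t\<close> \<open>t < \<delta>\<close>] u_le[OF \<open>0 < t\<close> \<open>t < \<delta>\<close>] k_pos assms(1)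
      by (intro divide_left_mono) auto
    also have "\<dots> \<le> k * (1 - (w t)\<^sup>2) / u t"
      using u_pos[OF \<open>0 < t\<close> \<open>t < \<delta>\<close>] k_pos gap[OF \<open>0 < t\<close> t(2)]
      by (intro divide_right_mono mult_left_mono) auto
    finally have "0 \<le> w' t + M - k * \<gamma> / t"
      using w'_lower[OF \<open>0 < t\<close> \<open>t < \<delta>\<close>] by linarith
    moreover have "(q has_real_derivative w' t + M - k * \<gamma> / t) (at t)"
      unfolding q_def using w_deriv[OF \<open>0 < t\<close> \<open>t < \<delta>\<close>] \<open>0 < t\<close>
      by (auto intro!: derivative_eq_intros)
    ultimately show "\<exists>y. (q has_real_derivative y) (at t) \<and> 0 \<le> y"
      by blast
  qed
  then show ?thesis
    unfolding q_def by (simp add: algebra_simps)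
qed

lemma w_gap_below_1:
  assumes "0 < s1" "s1 < \<delta>" "w s1 + M * s1 < 1"
  obtains s \<gamma> where "0 < s" "s \<le> s1" "0 < \<gamma>" "\<And>t. 0 < t \<Longrightarrow> t \<le> s \<Longrightarrow> \<gamma> \<le> 1 - (w t)\<^sup>2"
proof
  define s where "s = min s1 (1 / (M + 1))"
  have "M * s \<le> M * (1 / (M + 1))"
    using M_nonneg by (intro mult_left_mono) (simp_all add: s_def)
  also have "\<dots> < 1"
    using M_nonneg by simp
  finally have s: "0 < s" "s \<le> s1" "M * s < 1"
    using assms M_nonneg by (simp_all add: s_def)
  then show "0 < s" "s \<le> s1"
    by simp_all
  define \<beta> where "\<beta> = max (w s1 + M * s1) (M * s)"
  have "0 < \<beta>" "\<beta> < 1"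
    using w_plus_M_pos[OF assms(1,2)] assms(3) s unfolding \<beta>_def by auto
  then show "0 < 1 - \<beta>\<^sup>2"
    by (simp add: abs_square_less_1)
  fix t assume t: "0 < t" "t \<le> s"
  have "w t + M * t \<le> w s1 + M * s1" "0 < w t + M * t"
    using w_plus_M_mono[of t s1] w_plus_M_pos[of t] t s assms by simp_all
  moreover have "0 \<le> M * t" "M * t \<le> M * s"
    using M_nonneg t by (simp_all add: mult_left_mono)
  ultimately have "\<bar>w t\<bar> \<le> \<beta>"
    unfolding \<beta>_def by linarith
  then have "(w t)\<^sup>2 \<le> \<beta>\<^sup>2"
    by (metis abs_le_square_iff abs_of_pos \<open>0 < \<beta>\<close>)
  then show "1 - \<beta>\<^sup>2 \<le> 1 - (w t)\<^sup>2"
    by simp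
qed

lemma w_lower_bound:
  assumes "0 < s1" "s1 < \<delta>"
  shows "1 - M * s1 \<le> w s1"
proof (rule ccontr)
  assume "\<not> 1 - M * s1 \<le> w s1"
  then have p1: "w s1 + M * s1 < 1"
    by simp
  then obtain s \<gamma> where s: "0 < s" "s \<le> s1" and "0 < \<gamma>"
    and gap: "\<And>t. 0 < t \<Longrightarrow> t \<le> s \<Longrightarrow> \<gamma> \<le> 1 - (w t)\<^sup>2"
    using w_gap_below_1[OF assms] by blast
  define e where "e = s * exp (- 1 / (k * \<gamma>))"
  have "0 < e" "e \<le> s"
    using s \<open>0 < \<gamma>\<close> k_pos by (auto simp: e_def)
  then have "k * \<gamma> * (ln s - ln e) \<le> (w s + M * s) - (w e + M * e)"
    using w_plus_M_log_growth[OF \<open>0 < \<gamma>\<close> _ _ _ gap] s assms by simp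
  moreover have "k * \<gamma> * (ln s - ln e) = 1"
    using s \<open>0 < \<gamma>\<close> k_pos by (simp add: e_def ln_mult)
  moreover have "w s + M * s \<le> w s1 + M * s1"
    using w_plus_M_mono s assms by simp
  moreover have "0 < w e + M * e"
    using w_plus_M_pos[OF \<open>0 < e\<close>] \<open>e \<le> s\<close> s assms by simp
  ultimately show False
    using p1 by linarith
qed

lemma w_tendsto_1: "(w \<longlongrightarrow> 1) (at_right 0)"
proof (rule tendsto_sandwich[of "\<lambda>s. 1 - M * s" _ _ "\<lambda>_. 1"])
  show "eventually (\<lambda>s. 1 - M * s \<le> w s) (at_right 0)"
    unfolding eventually_at_right_field using w_lower_bound delta_pos by auto
  show "eventually (\<lambda>s. w s \<le> 1) (at_right 0)"
    unfolding eventually_at_right_field using w_bound delta_pos abs_le_D1 by auto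
  show "((\<lambda>s. 1 - M * s) \<longlongrightarrow> 1) (at_right 0)"
    by (auto intro!: tendsto_eq_intros)
qed simp

end

lemma one_sided_slope_limit:
  fixes u w w' :: "real \<Rightarrow> real" and I :: "real set"
  assumes "0 < \<delta>" "I = {0<..<\<delta>} \<or> I = {-\<delta><..<0}" "0 < k" "0 \<le> M"
    and u_deriv: "\<And>s. s \<in> I \<Longrightarrow> (u has_real_derivative w s) (at s)"
    and w_deriv: "\<And>s. s \<in> I \<Longrightarrow> (w has_real_derivative w' s) (at s)"
    and u_pos: "\<And>s. s \<in> I \<Longrightarrow> 0 < u s"
    and w_bound: "\<And>s. s \<in> I \<Longrightarrow> \<bar>w s\<bar> \<le> 1"
    and w'_lower: "eventually (\<lambda>s. k * (1 - (w s)\<^sup>2) / u s - M \<le> w' s) (at 0 within I)"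
    and u_tendsto_0: "(u \<longlongrightarrow> 0) (at 0 within I)"
  obtains \<sigma> where "\<bar>\<sigma>\<bar> = 1" "(w \<longlongrightarrow> \<sigma>) (at 0 within I)"
  using assms(2)
proof
  assume I: "I = {0<..<\<delta>}"
  have F: "at 0 within I = at_right 0"
    unfolding I using assms(1) by (intro at_within_nhd[of _ "{-\<delta><..<\<delta>}"]) auto
  obtain b where "0 < b" and b: "\<And>s. 0 < s \<Longrightarrow> s < b \<Longrightarrow> k * (1 - (w s)\<^sup>2) / u s - M \<le> w' s"
    using w'_lower unfolding F eventually_at_right_field by auto
  interpret slope_comparison u w w' k M "min \<delta> b"
    using assms(1,3,4) u_deriv w_deriv u_pos w_bound b u_tendsto_0[unfolded F] \<open>0 < b\<close>
    by unfold_locales (auto simp: I)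
  show thesis
    using that[of 1] w_tendsto_1 F by simp
next
  assume I: "I = {-\<delta><..<0}"
  have F: "at 0 within I = at_left 0"
    unfolding I using assms(1) by (intro at_within_nhd[of _ "{-\<delta><..<\<delta>}"]) auto
  obtain b where "b < 0" and b: "\<And>s. b < s \<Longrightarrow> s < 0 \<Longrightarrow> k * (1 - (w s)\<^sup>2) / u s - M \<le> w' s"
    using w'_lower unfolding F eventually_at_left_field by auto
  interpret slope_comparison "\<lambda>s. u (- s)" "\<lambda>s. - w (- s)" "\<lambda>s. w' (- s)" k M "min \<delta> (- b)"
  proof unfold_locales
    fix s assume s: "0 < s" "s < min \<delta> (- b)"
    then have "- s \<in> I"
      by (simp add: I)
    show "((\<lambda>s. u (- s)) has_real_derivative - w (- s)) (at s)"
      using DERIV_mirror[where f = u and x = s] u_deriv[OF \<open>- s \<in> I\<close>] by simp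
    show "((\<lambda>s. - w (- s)) has_real_derivative w' (- s)) (at s)"
      using DERIV_minus[OF iffD1[OF DERIV_mirror w_deriv[OF \<open>- s \<in> I\<close>]]] by simp
    show "0 < u (- s)" "\<bar>- w (- s)\<bar> \<le> 1"
      using u_pos w_bound \<open>- s \<in> I\<close> by auto
    show "k * (1 - (- w (- s))\<^sup>2) / u (- s) - M \<le> w' (- s)"
      using b[of "- s"] s by simp
  next
    show "((\<lambda>s. u (- s)) \<longlongrightarrow> 0) (at_right 0)"
      using u_tendsto_0 unfolding F filterlim_at_left_to_right by simp
  qed (use assms(1,3,4) \<open>b < 0\<close> in auto)
  have "(w \<longlongrightarrow> - 1) (at_left 0)"
    using tendsto_minus[OF w_tendsto_1] unfolding filterlim_at_left_to_right by simp
  then show thesis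
    using that[of "- 1"] F by simp
qed

section \<open>A curve approaching a wall\<close>

locale curve_at_wall =
  fixes t :: nat and J :: "int set" and phi :: "int \<Rightarrow> real" and nn :: "int \<Rightarrow> nat"
    and n :: nat and i :: int and H :: "real \<Rightarrow> real"
    and x x' x'' :: "real \<Rightarrow> real \<times> real" and I :: "real set" and \<delta> :: real
    and x0 :: "real \<times> real"
  assumes type_data: "type_data t J phi nn n"
    and H_cont: "continuous_on UNIV H"
    and admissible: "admissible t J i"
    and delta_pos: "\<delta> > 0"
    and I_cases: "I = {0<..<\<delta>} \<or> I = {-\<delta><..<0}"
    and x_deriv: "\<And>s. s \<in> I \<Longrightarrow> (x has_vector_derivative x' s) (at s)"
    and x'_deriv: "\<And>s. s \<in> I \<Longrightarrow> (x' has_vector_derivative x'' s) (at s)"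
    and curve_eq: "\<And>s. s \<in> I \<Longrightarrow>
           perp (x'' s) \<bullet> x' s
           + (\<Sum>j\<in>J. real (nn j) * (evec (phi j) \<bullet> x' s) / (perp (evec (phi j)) \<bullet> x s))
           = (real n - 1) * H s"
    and unit_speed_sq: "\<And>s. s \<in> I \<Longrightarrow> norm (x' s) ^ 2 = 1"
    and in_sector: "\<And>s. s \<in> I \<Longrightarrow> x s \<in> sector t phi i"
    and wall_tendsto_0: "((\<lambda>s. perp (evec (phi i)) \<bullet> x s) \<longlongrightarrow> 0) (at 0 within I)"
    and x_tendsto: "(x \<longlongrightarrow> x0) (at 0 within I)"
    and x0_neq_0: "x0 \<noteq> 0"
begin

definition regular_terms :: "real \<Rightarrow> real" where
  "regular_terms s =
     (\<Sum>j\<in>J - {i}. real (nn j) * (evec (phi j) \<bullet> x' s) / (perp (evec (phi j)) \<bullet> x s))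
     - (real n - 1) * H s"

lemma finite_J: "finite J" and i_in_J: "i \<in> J"
  using type_data_finite[OF type_data] admissible_mem[OF type_data admissible] .

lemma open_I: "open I"
  using I_cases by auto

lemma eventually_in_I: "eventually (\<lambda>s. s \<in> I) (at 0 within I)"
  by (simp add: eventually_at_filter)

lemma unit_speed: "s \<in> I \<Longrightarrow> norm (x' s) = 1"
  using unit_speed_sq[of s] norm_ge_zero[of "x' s"] by (auto simp: power2_eq_1_iff)

lemma x0_on_wall: "perp (evec (phi i)) \<bullet> x0 = 0"
proof -
  have "0 islimpt I"
    using I_cases delta_pos islimpt_greaterThanLessThan1[of 0 \<delta>]
      islimpt_greaterThanLessThan2[of "- \<delta>" 0] by auto
  then have "at 0 within I \<noteq> bot"
    using trivial_limit_within by blast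
  then show ?thesis
    using tendsto_unique wall_tendsto_0 tendsto_inner[OF tendsto_const x_tendsto] by blast
qed

lemma regular_terms_bounded:
  obtains M where "0 \<le> M" "eventually (\<lambda>s. \<bar>regular_terms s\<bar> \<le> M) (at 0 within I)"
proof (rule eventually_bounded_quotient_sum_diff[OF _ x_tendsto])
  show "finite (J - {i})"
    using finite_J by simp
  show "perp (evec (phi j)) \<bullet> x0 \<noteq> 0" if "j \<in> J - {i}" for j
    using inner_perp_evec_neq_0_off_wall[OF x0_on_wall x0_neq_0]
      type_data_sin_diff_neq_0[OF type_data i_in_J] that by blast
  show "eventually (\<lambda>s. norm (x' s) \<le> 1) (at 0 within I)"
    using eventually_in_I by eventually_elim (simp add: unit_speed)
  show "((\<lambda>s. (real n - 1) * H s) \<longlongrightarrow> (real n - 1) * H 0) (at 0 within I)"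
    using H_cont unfolding continuous_on_def by (auto intro!: tendsto_intros intro: tendsto_within_subset)
qed (use that in \<open>auto simp: regular_terms_def\<close>)

lemma normal_accel_ge:
  assumes "s \<in> I"
  shows "real (nn i) * (1 - (perp (evec (phi i)) \<bullet> x' s)\<^sup>2) / (perp (evec (phi i)) \<bullet> x s)
      - \<bar>regular_terms s\<bar> \<le> perp (evec (phi i)) \<bullet> x'' s"
proof (rule inner_perp_evec_accel_ge)
  show "norm (x' s) = 1"
    using unit_speed[OF assms] .
  show "x' s \<bullet> x'' s = 0"
    using unit_speed_imp_orthogonal_derivative[OF open_I assms x'_deriv unit_speed] .
  show "perp (x'' s) \<bullet> x' s + real (nn i) * (evec (phi i) \<bullet> x' s) / (perp (evec (phi i)) \<bullet> x s)
      + regular_terms s = 0"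
    using curve_eq[OF assms] unfolding regular_terms_def sum.remove[OF finite_J i_in_J] by simp
qed

lemma normal_velocity_tendsto:
  obtains \<sigma> where "\<bar>\<sigma>\<bar> = 1"
    and "((\<lambda>s. perp (evec (phi i)) \<bullet> x' s) \<longlongrightarrow> \<sigma>) (at 0 within I)"
proof -
  let ?f = "perp (evec (phi i))"
  obtain M where "0 \<le> M" and M: "eventually (\<lambda>s. \<bar>regular_terms s\<bar> \<le> M) (at 0 within I)"
    using regular_terms_bounded .
  have lower: "eventually (\<lambda>s. real (nn i) * (1 - (?f \<bullet> x' s)\<^sup>2) / (?f \<bullet> x s) - M \<le> ?f \<bullet> x'' s)
      (at 0 within I)"
    using eventually_in_I M by eventually_elim (use normal_accel_ge in fastforce)
  have "0 < real (nn i)"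
    using type_data_multiplicity_pos[OF type_data i_in_J] by simp
  have "((\<lambda>s. ?f \<bullet> x s) has_real_derivative ?f \<bullet> x' s) (at s)"
    and "((\<lambda>s. ?f \<bullet> x' s) has_real_derivative ?f \<bullet> x'' s) (at s)"
    and "0 < ?f \<bullet> x s" and "\<bar>?f \<bullet> x' s\<bar> \<le> 1" if "s \<in> I" for s
    using x_deriv[OF that] x'_deriv[OF that] sector_inner_perp_pos[OF type_data admissible in_sector[OF that]]
      Cauchy_Schwarz_ineq2[of ?f "x' s"] unit_speed[OF that]
    by (simp_all add: has_real_derivative_inner_right norm_perp_evec)
  from one_sided_slope_limit[OF delta_pos I_cases \<open>0 < real (nn i)\<close> \<open>0 \<le> M\<close> this lower wall_tendsto_0]
  show thesis
    using that by blast
qed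

end

theorem proposition3p1:
  fixes t :: nat and J :: "int set" and phi :: "int \<Rightarrow> real" and nn :: "int \<Rightarrow> nat"
    and n :: nat and i :: int and H :: "real \<Rightarrow> real"
    and x x' x'' :: "real \<Rightarrow> real \<times> real" and I :: "real set" and \<delta> :: real
    and x0 :: "real \<times> real"
  assumes "type_data t J phi nn n"
    and "continuous_on UNIV H"
    and "admissible t J i"
    and "\<delta> > 0"
    and "I = {0<..<\<delta>} \<or> I = {-\<delta><..<0}"
    and "\<And>s. s \<in> I \<Longrightarrow> (x has_vector_derivative x' s) (at s)"
    and "\<And>s. s \<in> I \<Longrightarrow> (x' has_vector_derivative x'' s) (at s)"
    and "\<And>s. s \<in> I \<Longrightarrow>
           perp (x'' s) \<bullet> x' s
           + (\<Sum>j\<in>J. real (nn j) * (evec (phi j) \<bullet> x' s) / (perp (evec (phi j)) \<bullet> x s))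
           = (real n - 1) * H s"
    and "\<And>s. s \<in> I \<Longrightarrow> norm (x' s) ^ 2 = 1"
    and "\<And>s. s \<in> I \<Longrightarrow> x s \<in> sector t phi i"
    and "((\<lambda>s. perp (evec (phi i)) \<bullet> x s) \<longlongrightarrow> 0) (at 0 within I)"
    and "(x \<longlongrightarrow> x0) (at 0 within I)"
    and "x0 \<noteq> 0"
  shows "(\<exists>v. (x' \<longlongrightarrow> v) (at 0 within I)) \<and>
         ((\<lambda>s. evec (phi i) \<bullet> x' s) \<longlongrightarrow> 0) (at 0 within I)"
proof -
  interpret curve_at_wall t J phi nn n i H x x' x'' I \<delta> x0
    using assms by unfold_locales
  obtain \<sigma> where "\<bar>\<sigma>\<bar> = 1" "((\<lambda>s. perp (evec (phi i)) \<bullet> x' s) \<longlongrightarrow> \<sigma>) (at 0 within I)"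
    by (rule normal_velocity_tendsto)
  moreover have "eventually (\<lambda>s. norm (x' s) = 1) (at 0 within I)"
    using eventually_in_I by eventually_elim (rule unit_speed)
  ultimately show ?thesis
    using tendsto_velocity_if_tendsto_normal_component by blast
qed

end
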